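(* Let $n\ge1$ and $\lambda=(\lambda_1,\dots,\lambda_n)\in\mathbb{R}^n$ with $0<\lambda_1\le\cdots\le\lambda_n$, and let $(\mathfrak{a},\langle\cdot,\cdot\rangle_{\mathfrak{a}})$ be an abelian quadratic Lie algebra. Endow $\mathrm{osc}(\lambda)\times\mathfrak{a}$ with the product quadratic structure. Then every derivation $D$ of $\mathrm{osc}(\lambda)\times\mathfrak{a}$ which is skew-symmetric with respect to the product form satisfies $D(e_0)=0$. In particular, $\mathrm{osc}(\lambda)\times\mathfrak{a}$ admits no $k$-symplectic structure for any $k\ge1$.
   Context: The oscillator Lie algebra $\mathrm{osc}(\lambda)$ has basis $\{e_{-1},e_0,e_i,\check e_i\}_{i=1,\dots,n}$ with nonvanishing brackets $[e_{-1},e_i]=\lambda_i\check e_i$, $[e_{-1},\check e_i]=-\lambda_ie_i$, $[e_i,\check e_i]=e_0$ (and those obtained by antisymmetry), and invariant quadratic form given for $x=x_{-1}e_{-1}+x_0e_0+\sum_i(x_ie_i+y_i\check e_i)$ by $\langle x,x\rangle=2x_{-1}x_0+\sum_i\frac{1}{\lambda_i}(x_i^2+y_i^2)$. An abelian quadratic Lie algebra is an abelian real Lie algebra with a nondegenerate symmetric bilinear form; the product structure is the Lie algebra direct product with orthogonal sum of forms. A $k$-symplectic structure on a real Lie algebra $\mathfrak{k}$ of dimension $m(k+1)$ ($m,k\ge1$) is a pair consisting of a Lie subalgebra $\mathfrak{h}\subset\mathfrak{k}$ of dimension $mk$ and a family $(\theta_1,\dots,\theta_k)$ of skew-symmetric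 bilinear forms on $\mathfrak{k}$ such that: (i) $\bigcap_{i=1}^k\ker\theta_i=\{0\}$, where $\ker\theta_i=\{u:\theta_i(u,v)=0\ \forall v\}$; (ii) each $\theta_i$ is a 2-cocycle: $\theta_i([u,v],w)+\theta_i([v,w],u)+\theta_i([w,u],v)=0$ for all $u,v,w$; (iii) $\theta_i(u,v)=0$ for all $u,v\in\mathfrak{h}$ and all $i$. *)

theory Defs
  imports "HOL-Analysis.Analysis"
begin

text \<open>Elements of osc(lambda) x a are tuples (s, t, x, y, p) meaning
  s e_{-1} + t e_0 + sum_i (x_i e_i + y_i e'_i) + p, where p lies in the
  abelian factor, given as a linear subspace A of a finite-dimensional real
  vector space 'a (so that A = 0 is allowed).\<close>

type_synonym ('n, 'a) oscv = "real \<times> real \<times> (real^'n) \<times> (real^'n) \<times> 'a"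

definition osc_carrier :: "'a::real_vector set \<Rightarrow> ('n::finite, 'a) oscv set" where
  "osc_carrier A = {(s, t, x, y, p). p \<in> A}"

definition osc_bracket :: "real^'n::finite \<Rightarrow> ('n, 'a::real_vector) oscv \<Rightarrow> ('n, 'a) oscv \<Rightarrow> ('n, 'a) oscv" where
  "osc_bracket lam u v = (case u of (s1, t1, x1, y1, p1) \<Rightarrow> case v of (s2, t2, x2, y2, p2) \<Rightarrow>
     (0,
      (\<Sum>i\<in>UNIV. x1$i * y2$i - y1$i * x2$i),
      (\<chi> i. lam$i * (s2 * y1$i - s1 * y2$i)),
      (\<chi> i. lam$i * (s1 * x2$i - s2 * x1$i)),
      0))"

definition osc_form :: "real^'n::finite \<Rightarrow> ('a \<Rightarrow> 'a \<Rightarrow> real) \<Rightarrow> ('n, 'a) oscv \<Rightarrow> ('n, 'a) oscv \<Rightarrow> real" where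
  "osc_form lam B u v = (case u of (s1, t1, x1, y1, p1) \<Rightarrow> case v of (s2, t2, x2, y2, p2) \<Rightarrow>
     s1 * t2 + t1 * s2 + (\<Sum>i\<in>UNIV. (x1$i * x2$i + y1$i * y2$i) / lam$i) + B p1 p2)"

definition osc_e0 :: "('n::finite, 'a::real_vector) oscv" where
  "osc_e0 = (0, 1, 0, 0, 0)"

definition is_derivation :: "'v::real_vector set \<Rightarrow> ('v \<Rightarrow> 'v \<Rightarrow> 'v) \<Rightarrow> ('v \<Rightarrow> 'v) \<Rightarrow> bool" where
  "is_derivation K br D \<longleftrightarrow>
     (\<forall>u\<in>K. D u \<in> K) \<and>
     (\<forall>u\<in>K. \<forall>v\<in>K. D (u + v) = D u + D v) \<and>
     (\<forall>c. \<forall>u\<in>K. D (c *\<^sub>R u) = c *\<^sub>R D u) \<and>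
     (\<forall>u\<in>K. \<forall>v\<in>K. D (br u v) = br (D u) v + br u (D v))"

definition is_skew_wrt :: "'v set \<Rightarrow> ('v \<Rightarrow> 'v \<Rightarrow> real) \<Rightarrow> ('v \<Rightarrow> 'v) \<Rightarrow> bool" where
  "is_skew_wrt K q D \<longleftrightarrow> (\<forall>u\<in>K. \<forall>v\<in>K. q (D u) v + q u (D v) = 0)"

definition skew_bilinear_on :: "'v::real_vector set \<Rightarrow> ('v \<Rightarrow> 'v \<Rightarrow> real) \<Rightarrow> bool" where
  "skew_bilinear_on K \<theta> \<longleftrightarrow>
     (\<forall>u\<in>K. \<forall>v\<in>K. \<forall>w\<in>K. \<theta> (u + v) w = \<theta> u w + \<theta> v w) \<and>
     (\<forall>c. \<forall>u\<in>K. \<forall>w\<in>K. \<theta> (c *\<^sub>R u) w = c * \<theta> u w) \<and>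
     (\<forall>u\<in>K. \<forall>v\<in>K. \<theta> u v = - \<theta> v u)"

definition form_kernel :: "'v set \<Rightarrow> ('v \<Rightarrow> 'v \<Rightarrow> real) \<Rightarrow> 'v set" where
  "form_kernel K \<theta> = {u\<in>K. \<forall>v\<in>K. \<theta> u v = 0}"

definition k_symplectic_structure ::
  "'v::euclidean_space set \<Rightarrow> ('v \<Rightarrow> 'v \<Rightarrow> 'v) \<Rightarrow> nat \<Rightarrow> nat \<Rightarrow> 'v set \<Rightarrow> (nat \<Rightarrow> 'v \<Rightarrow> 'v \<Rightarrow> real) \<Rightarrow> bool" where
  "k_symplectic_structure K br m k h \<theta> \<longleftrightarrow>
     dim K = m * (k + 1) \<and>
     subspace h \<and> h \<subseteq> K \<and> dim h = m * k \<and> (\<forall>u\<in>h. \<forall>v\<in>h. br u v \<in> h) \<and>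
     (\<forall>i\<in>{1..k}. skew_bilinear_on K (\<theta> i)) \<and>
     (\<Inter>i\<in>{1..k}. form_kernel K (\<theta> i)) = {0} \<and>
     (\<forall>i\<in>{1..k}. \<forall>u\<in>K. \<forall>v\<in>K. \<forall>w\<in>K.
        \<theta> i (br u v) w + \<theta> i (br v w) u + \<theta> i (br w u) v = 0) \<and>
     (\<forall>i\<in>{1..k}. \<forall>u\<in>h. \<forall>v\<in>h. \<theta> i u v = 0)"

definition admits_k_symplectic :: "'v::euclidean_space set \<Rightarrow> ('v \<Rightarrow> 'v \<Rightarrow> 'v) \<Rightarrow> nat \<Rightarrow> bool" where
  "admits_k_symplectic K br k \<longleftrightarrow> (\<exists>m\<ge>1. \<exists>h \<theta>. k_symplectic_structure K br m k h \<theta>)"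

end

theory Submission
  imports Defs
begin

text \<open>Since e_0 = [e_i, e'_i], a derivation D satisfies D e_0 = [D e_i, e'_i] + [e_i, D e'_i]. The
  bracket [u, e'_i] only sees the e_{-1}- and e_i-components of u. The e_{-1}-component of D e_i
  vanishes because e_i lies in the derived algebra, and its e_i-component vanishes because
  skewness gives 2 <D e_i, e_i> = 0; symmetrically for D e'_i, so D e_0 = 0.

  For a 2-cocycle theta, the cocycle identity with a central argument gives theta(e_0, [u, v]) = 0,
  which covers the derived algebra. The remaining directions are e_{-1}, where the cocycle
  identity on (e_i, e'_i, e_{-1}) gives theta(e_0, e_{-1}) = -lambda_i (theta(e_i, e_i) +
  theta(e'_i, e'_i)) = 0, and the abelian factor a, which is central, so that
  theta(e_0, p) = theta([e_i, e'_i], p) = 0. Hence e_0 lies in the kernel of every theta_j,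
  contradicting the first axiom of a k-symplectic structure.\<close>

definition is_cocycle :: "'v set \<Rightarrow> ('v \<Rightarrow> 'v \<Rightarrow> 'v) \<Rightarrow> ('v \<Rightarrow> 'v \<Rightarrow> real) \<Rightarrow> bool" where
  "is_cocycle K br \<theta> \<longleftrightarrow>
     (\<forall>u\<in>K. \<forall>v\<in>K. \<forall>w\<in>K. \<theta> (br u v) w + \<theta> (br v w) u + \<theta> (br w u) v = 0)"

definition central_in :: "'v set \<Rightarrow> ('v \<Rightarrow> 'v \<Rightarrow> 'v::zero) \<Rightarrow> 'v \<Rightarrow> bool" where
  "central_in K br z \<longleftrightarrow> (\<forall>u\<in>K. br z u = 0 \<and> br u z = 0)"

lemma skew_bilinear_onD:
  assumes "skew_bilinear_on K \<theta>"
  shows skew_bilinear_on_add_left: "\<lbrakk>u \<in> K; v \<in> K; w \<in> K\<rbrakk> \<Longrightarrow> \<theta> (u + v) w = \<theta> u w + \<theta> v w"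
    and skew_bilinear_on_scale_left: "\<lbrakk>u \<in> K; w \<in> K\<rbrakk> \<Longrightarrow> \<theta> (c *\<^sub>R u) w = c * \<theta> u w"
    and skew_bilinear_on_antisym: "\<lbrakk>u \<in> K; v \<in> K\<rbrakk> \<Longrightarrow> \<theta> u v = - \<theta> v u"
  using assms unfolding skew_bilinear_on_def by blast+

lemma is_derivationD:
  assumes "is_derivation K br D"
  shows derivation_closed: "u \<in> K \<Longrightarrow> D u \<in> K"
    and derivation_Leibniz: "\<lbrakk>u \<in> K; v \<in> K\<rbrakk> \<Longrightarrow> D (br u v) = br (D u) v + br u (D v)"
  using assms unfolding is_derivation_def by blast+

lemma is_skew_wrtD:
  "\<lbrakk>is_skew_wrt K q D; u \<in> K; v \<in> K\<rbrakk> \<Longrightarrow> q (D u) v + q u (D v) = 0"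
  unfolding is_skew_wrt_def by blast

lemma skew_bilinear_on_zero_left:
  assumes "skew_bilinear_on K \<theta>" and "w \<in> K"
  shows "\<theta> 0 w = 0"
  using skew_bilinear_on_scale_left[OF assms, of w 0] assms(2) by simp

lemma skew_bilinear_on_self:
  assumes "skew_bilinear_on K \<theta>" and "u \<in> K"
  shows "\<theta> u u = 0"
  using skew_bilinear_on_antisym[OF assms(1,2,2)] by linarith

lemma subspace_left_annihilator:
  assumes "skew_bilinear_on K \<theta>" and "subspace K" and "z \<in> K"
  shows "subspace {u\<in>K. \<theta> u z = 0}"
  unfolding subspace_def
proof (intro conjI ballI allI)
  show "0 \<in> {u\<in>K. \<theta> u z = 0}"
    using assms subspace_0 skew_bilinear_on_zero_left by blast
  show "u + v \<in> {u\<in>K. \<theta> u z = 0}" if "u \<in> {u\<in>K. \<theta> u z = 0}" "v \<in> {u\<in>K. \<theta> u z = 0}" for u v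
    using that assms subspace_add skew_bilinear_on_add_left[OF assms(1)] by fastforce
  show "c *\<^sub>R u \<in> {u\<in>K. \<theta> u z = 0}" if "u \<in> {u\<in>K. \<theta> u z = 0}" for c u
    using that assms subspace_scale skew_bilinear_on_scale_left[OF assms(1)] by fastforce
qed

lemma cocycle_bracket_central:
  assumes "skew_bilinear_on K \<theta>" and "is_cocycle K br \<theta>" and "central_in K br z"
    and "u \<in> K" and "v \<in> K" and "z \<in> K"
  shows "\<theta> (br u v) z = 0"
proof -
  have "\<theta> (br u v) z + \<theta> (br v z) u + \<theta> (br z u) v = 0"
    using assms(2,4-6) unfolding is_cocycle_def by blast
  moreover have "br v z = 0" and "br z u = 0"
    using assms(3-5) unfolding central_in_def by auto
  ultimately show ?thesis
    using skew_bilinear_on_zero_left[OF assms(1)] assms(4,5) by simp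
qed

definition osc_em1 :: "('n::finite, 'a::real_vector) oscv" where
  "osc_em1 = (1, 0, 0, 0, 0)"

definition osc_e :: "'n::finite \<Rightarrow> ('n, 'a::real_vector) oscv" where
  "osc_e i = (0, 0, axis i 1, 0, 0)"

definition osc_e_check :: "'n::finite \<Rightarrow> ('n, 'a::real_vector) oscv" where
  "osc_e_check i = (0, 0, 0, axis i 1, 0)"

lemma osc_carrier_iff [simp]: "(s, t, x, y, p) \<in> osc_carrier A \<longleftrightarrow> p \<in> A"
  by (simp add: osc_carrier_def)

lemma subspace_osc_carrier:
  assumes "subspace A"
  shows "subspace (osc_carrier A :: ('n::finite, 'a::real_vector) oscv set)"
  using assms unfolding subspace_def osc_carrier_def by (auto simp: zero_prod_def)

lemma osc_basis_in_carrier: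
  assumes "subspace A"
  shows "osc_em1 \<in> osc_carrier A" and "osc_e i \<in> osc_carrier A"
    and "osc_e_check i \<in> osc_carrier A" and "osc_e0 \<in> osc_carrier A"
  using subspace_0[OF assms]
  by (simp_all add: osc_em1_def osc_e_def osc_e_check_def osc_e0_def)

lemma fst_osc_bracket: "fst (osc_bracket lam u v) = 0"
  by (simp add: osc_bracket_def split: prod.splits)

lemma osc_bracket_in_carrier:
  "subspace A \<Longrightarrow> osc_bracket lam u v \<in> osc_carrier A"
  by (simp add: osc_bracket_def subspace_0 split: prod.splits)

lemmas axis_delta_simps =
  axis_def mult_if_delta if_distrib[where f="\<lambda>c. _ * c"] if_distrib[where f="\<lambda>c. c / _"] sum.delta

lemma osc_bracket_e_e_check: "osc_bracket lam (osc_e i) (osc_e_check i) = osc_e0"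
  by (simp add: osc_bracket_def osc_e_def osc_e_check_def osc_e0_def vec_eq_iff
      axis_delta_simps cong: if_cong)

lemma osc_bracket_e_check_em1: "osc_bracket lam (osc_e_check i) osc_em1 = lam$i *\<^sub>R osc_e i"
  by (simp add: osc_bracket_def osc_e_def osc_e_check_def osc_em1_def vec_eq_iff axis_def)

lemma osc_bracket_em1_e: "osc_bracket lam osc_em1 (osc_e i) = lam$i *\<^sub>R osc_e_check i"
  by (simp add: osc_bracket_def osc_e_def osc_e_check_def osc_em1_def vec_eq_iff axis_def)

lemma osc_bracket_em1_surj:
  assumes "\<forall>i. lam$i \<noteq> 0" and "subspace A"
  obtains w where "w \<in> osc_carrier A" and "osc_bracket lam osc_em1 w = (0, 0, x, y, 0)"
proof
  show "(0, 0, \<chi> j. y$j / lam$j, \<chi> j. - x$j / lam$j, 0) \<in> osc_carrier A"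
    using subspace_0[OF assms(2)] by simp
  show "osc_bracket lam osc_em1 (0, 0, \<chi> j. y$j / lam$j, \<chi> j. - x$j / lam$j, 0) = (0, 0, x, y, 0)"
    using assms(1) by (simp add: osc_bracket_def osc_em1_def vec_eq_iff)
qed

lemma osc_bracket_e_check_right:
  "osc_bracket lam (s, t, x, y, p) (osc_e_check i) = (0, x$i, - (s * lam$i) *\<^sub>R axis i 1, 0, 0)"
  by (simp add: osc_bracket_def osc_e_check_def vec_eq_iff
      axis_delta_simps cong: if_cong)

lemma osc_bracket_e_left:
  "osc_bracket lam (osc_e i) (s, t, x, y, p) = (0, y$i, 0, - (s * lam$i) *\<^sub>R axis i 1, 0)"
  by (simp add: osc_bracket_def osc_e_def vec_eq_iff
      axis_delta_simps cong: if_cong)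

lemma central_osc_e0: "central_in K (osc_bracket lam) osc_e0"
  by (auto simp: central_in_def osc_bracket_def osc_e0_def zero_prod_def vec_eq_iff split: prod.splits)

lemma central_osc_abelian: "central_in K (osc_bracket lam) (0, 0, 0, 0, p)"
  by (auto simp: central_in_def osc_bracket_def zero_prod_def vec_eq_iff split: prod.splits)

lemma osc_form_e:
  "osc_form lam B (s, t, x, y, p) (osc_e i) + osc_form lam B (osc_e i) (s, t, x, y, p)
     = 2 * (x$i / lam$i) + B p 0 + B 0 p"
  by (simp add: osc_form_def osc_e_def axis_delta_simps cong: if_cong)

lemma osc_form_e_check:
  "osc_form lam B (s, t, x, y, p) (osc_e_check i) + osc_form lam B (osc_e_check i) (s, t, x, y, p)
     = 2 * (y$i / lam$i) + B p 0 + B 0 p"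
  by (simp add: osc_form_def osc_e_check_def axis_delta_simps cong: if_cong)

lemma bilinear_symmetric_zero:
  assumes "subspace A"
    and "\<forall>p\<in>A. \<forall>q\<in>A. \<forall>r\<in>A. \<forall>c. B (p + q) r = B p r + B q r \<and> B (c *\<^sub>R p) r = c * B p r"
    and "\<forall>p\<in>A. \<forall>q\<in>A. B p q = B q p"
    and "p \<in> A"
  shows "B 0 p = 0" and "B p 0 = 0"
proof -
  have "B ((0::real) *\<^sub>R 0) p = 0 * B 0 p"
    using assms(2,4) subspace_0[OF assms(1)] by blast
  then show "B 0 p = 0" by simp
  then show "B p 0 = 0"
    using assms(3,4) subspace_0[OF assms(1)] by metis
qed

lemma fst_derivation_osc_bracket:
  assumes "is_derivation K (osc_bracket lam) D" and "u \<in> K" and "v \<in> K"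
  shows "fst (D (osc_bracket lam u v)) = 0"
  by (simp add: derivation_Leibniz[OF assms] fst_osc_bracket)

lemma osc_skew_derivation_e0:
  fixes lam :: "real^'n::finite" and A :: "'a::real_vector set"
  assumes lam_nz: "\<forall>i. lam$i \<noteq> 0" and A: "subspace A"
    and B_zero_left: "\<And>p. p \<in> A \<Longrightarrow> B 0 p = 0"
    and B_zero_right: "\<And>p. p \<in> A \<Longrightarrow> B p 0 = 0"
    and der: "is_derivation (osc_carrier A) (osc_bracket lam) D"
    and skew: "is_skew_wrt (osc_carrier A) (osc_form lam B) D"
  shows "D (osc_e0 :: ('n, 'a) oscv) = 0"
proof -
  let ?K = "osc_carrier A :: ('n, 'a) oscv set"
  note basis = osc_basis_in_carrier[OF A]
  have fst_D: "fst (D (0, 0, x, y, 0)) = 0" for x y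
  proof -
    obtain w where "w \<in> ?K" and "osc_bracket lam osc_em1 w = (0, 0, x, y, 0)"
      using osc_bracket_em1_surj[OF lam_nz A] by blast
    then show ?thesis
      using fst_derivation_osc_bracket[OF der basis(1)] by metis
  qed
  fix i :: 'n
  obtain s1 t1 x1 y1 p1 where D1: "D (osc_e i) = (s1, t1, x1, y1, p1)"
    by (cases "D (osc_e i)")
  obtain s2 t2 x2 y2 p2 where D2: "D (osc_e_check i) = (s2, t2, x2, y2, p2)"
    by (cases "D (osc_e_check i)")
  have "D (osc_e i) \<in> ?K" and "D (osc_e_check i) \<in> ?K"
    by (intro derivation_closed[OF der] basis)+
  then have p1: "p1 \<in> A" and p2: "p2 \<in> A"
    by (simp_all add: D1 D2)
  have s1: "s1 = 0" and s2: "s2 = 0"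
    using fst_D[of "axis i 1" 0] fst_D[of 0 "axis i 1"] D1 D2
    by (simp_all add: osc_e_def osc_e_check_def)
  have "osc_form lam B (D (osc_e i)) (osc_e i) + osc_form lam B (osc_e i) (D (osc_e i)) = 0"
    and "osc_form lam B (D (osc_e_check i)) (osc_e_check i)
         + osc_form lam B (osc_e_check i) (D (osc_e_check i)) = 0"
    by (intro is_skew_wrtD[OF skew] basis)+
  then have x1: "x1$i = 0" and y2: "y2$i = 0"
    using lam_nz B_zero_left B_zero_right p1 p2
    by (simp_all add: D1 D2 osc_form_e osc_form_e_check)
  have "D osc_e0
      = osc_bracket lam (D (osc_e i)) (osc_e_check i) + osc_bracket lam (osc_e i) (D (osc_e_check i))"
    using derivation_Leibniz[OF der basis(2)[of i] basis(3)[of i]]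
    by (simp add: osc_bracket_e_e_check)
  also have "\<dots> = 0"
    by (simp add: D1 D2 s1 s2 x1 y2 osc_bracket_e_check_right osc_bracket_e_left zero_prod_def)
  finally show ?thesis .
qed

lemma osc_e0_in_cocycle_kernel:
  fixes lam :: "real^'n::finite" and A :: "'a::real_vector set"
  assumes lam_nz: "\<forall>i. lam$i \<noteq> 0" and A: "subspace A"
    and skew: "skew_bilinear_on (osc_carrier A) \<theta>"
    and cocycle: "is_cocycle (osc_carrier A) (osc_bracket lam) \<theta>"
  shows "(osc_e0 :: ('n, 'a) oscv) \<in> form_kernel (osc_carrier A) \<theta>"
proof -
  let ?K = "osc_carrier A :: ('n, 'a) oscv set"
  define S where "S = {u\<in>?K. \<theta> u osc_e0 = 0}"
  note basis = osc_basis_in_carrier[OF A]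
  have S: "subspace S"
    unfolding S_def by (rule subspace_left_annihilator[OF skew subspace_osc_carrier[OF A] basis(4)])
  have bracket_S: "osc_bracket lam u v \<in> S" if "u \<in> ?K" and "v \<in> ?K" for u v
    using cocycle_bracket_central[OF skew cocycle central_osc_e0 that basis(4)]
    by (simp add: S_def osc_bracket_in_carrier[OF A])
  fix i :: 'n
  have e0_S: "osc_e0 \<in> S"
    using bracket_S[OF basis(2)[of i] basis(3)[of i]] by (simp add: osc_bracket_e_e_check)
  have derived_S: "(0, 0, x, y, 0) \<in> S" for x y
    using osc_bracket_em1_surj[OF lam_nz A] bracket_S[OF basis(1)] by metis
  have abelian_S: "(0, 0, 0, 0, p) \<in> S" if "p \<in> A" for p
  proof -
    have p: "(0, 0, 0, 0, p) \<in> ?K" using that by simp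
    have "\<theta> (osc_bracket lam (osc_e i) (osc_e_check i)) (0, 0, 0, 0, p) = 0"
      using cocycle_bracket_central[OF skew cocycle central_osc_abelian] basis p by blast
    then show ?thesis
      using skew_bilinear_on_antisym[OF skew p basis(4)] p
      by (simp add: S_def osc_bracket_e_e_check)
  qed
  have em1_S: "osc_em1 \<in> S"
  proof -
    have "\<theta> (osc_bracket lam (osc_e i) (osc_e_check i)) osc_em1
        + \<theta> (osc_bracket lam (osc_e_check i) osc_em1) (osc_e i)
        + \<theta> (osc_bracket lam osc_em1 (osc_e i)) (osc_e_check i) = 0"
      using cocycle basis unfolding is_cocycle_def by blast
    then have "\<theta> osc_e0 osc_em1 = 0"
      by (simp add: osc_bracket_e_e_check osc_bracket_e_check_em1 osc_bracket_em1_e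
          skew_bilinear_on_scale_left[OF skew] skew_bilinear_on_self[OF skew] basis)
    then show ?thesis
      using skew_bilinear_on_antisym[OF skew basis(1,4)] basis(1) by (simp add: S_def)
  qed
  have "v \<in> S" if "v \<in> ?K" for v
  proof -
    obtain s t x y p where v: "v = (s, t, x, y, p)" by (cases v)
    then have "p \<in> A" using that by simp
    moreover have "v = s *\<^sub>R osc_em1 + t *\<^sub>R osc_e0 + (0, 0, x, y, 0) + (0, 0, 0, 0, p)"
      by (simp add: v osc_em1_def osc_e0_def)
    ultimately show ?thesis
      using S em1_S e0_S derived_S abelian_S by (simp add: subspace_add subspace_scale)
  qed
  then show ?thesis
    using skew_bilinear_on_antisym[OF skew basis(4)] basis(4)
    by (auto simp: form_kernel_def S_def)
qed

lemma osc_not_admits_k_symplectic: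
  fixes lam :: "real^'n::finite" and A :: "'a::euclidean_space set"
  assumes lam_nz: "\<forall>i. lam$i \<noteq> 0" and A: "subspace A"
  shows "\<not> admits_k_symplectic (osc_carrier A :: ('n, 'a) oscv set) (osc_bracket lam) k"
proof
  assume "admits_k_symplectic (osc_carrier A :: ('n, 'a) oscv set) (osc_bracket lam) k"
  then obtain m h \<theta>
    where S: "k_symplectic_structure (osc_carrier A :: ('n, 'a) oscv set) (osc_bracket lam) m k h \<theta>"
    unfolding admits_k_symplectic_def by blast
  have "osc_e0 \<in> form_kernel (osc_carrier A) (\<theta> j)" if "j \<in> {1..k}" for j
    using S that by (intro osc_e0_in_cocycle_kernel[OF lam_nz A])
      (auto simp: k_symplectic_structure_def is_cocycle_def)
  then have "(osc_e0 :: ('n, 'a) oscv) \<in> (\<Inter>j\<in>{1..k}. form_kernel (osc_carrier A) (\<theta> j))"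
    by blast
  moreover have "(\<Inter>j\<in>{1..k}. form_kernel (osc_carrier A) (\<theta> j)) = {0}"
    using S by (simp add: k_symplectic_structure_def)
  ultimately have "(osc_e0 :: ('n, 'a) oscv) = 0"
    by blast
  then show False
    by (simp add: osc_e0_def zero_prod_def)
qed

theorem mainTheorem9:
  fixes lam :: "real^'n::{finite,linorder}"
    and A :: "'a::euclidean_space set"
    and B :: "'a \<Rightarrow> 'a \<Rightarrow> real"
  assumes lam_pos: "\<forall>i. 0 < lam$i"
    and lam_mono: "\<forall>i j. i \<le> j \<longrightarrow> lam$i \<le> lam$j"
    and A_sub: "subspace A"
    and B_lin: "\<forall>p\<in>A. \<forall>q\<in>A. \<forall>r\<in>A. \<forall>c. B (p + q) r = B p r + B q r \<and> B (c *\<^sub>R p) r = c * B p r"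
    and B_sym: "\<forall>p\<in>A. \<forall>q\<in>A. B p q = B q p"
    and B_nondeg: "\<forall>p\<in>A. (\<forall>q\<in>A. B p q = 0) \<longrightarrow> p = 0"
  shows "(\<forall>D. is_derivation (osc_carrier A) (osc_bracket lam) D \<and>
              is_skew_wrt (osc_carrier A) (osc_form lam B) D
            \<longrightarrow> D osc_e0 = 0) \<and>
         (\<forall>k\<ge>1. \<not> admits_k_symplectic (osc_carrier A :: ('n, 'a) oscv set) (osc_bracket lam) k)"
proof (intro conjI allI impI)
  have lam_nz: "\<forall>i. lam$i \<noteq> 0"
    using lam_pos by (metis less_irrefl)
  have B_zero: "B 0 p = 0" "B p 0 = 0" if "p \<in> A" for p
    by (rule bilinear_symmetric_zero[OF A_sub B_lin B_sym that])+
  show "D osc_e0 = 0"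
    if "is_derivation (osc_carrier A) (osc_bracket lam) D \<and>
        is_skew_wrt (osc_carrier A) (osc_form lam B) D" for D
    using that osc_skew_derivation_e0[where B = B, OF lam_nz A_sub B_zero] by blast
  show "\<not> admits_k_symplectic (osc_carrier A :: ('n, 'a) oscv set) (osc_bracket lam) k" for k
    by (rule osc_not_admits_k_symplectic[OF lam_nz A_sub])
qed

end
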